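(* Let $X=[0,1[$ and let $\widehat{\operatorname{PC}^{\bowtie}}$ be the group of all bijections $X\to X$ that are continuous outside a finite subset of $X$. Let ${\mathfrak S}_{\mathrm{fin}}\subset \widehat{\operatorname{PC}^{\bowtie}}$ be the subgroup of finitely supported permutations of $X$ and $\varepsilon_{\mathrm{fin}}:{\mathfrak S}_{\mathrm{fin}}\to \mathbb{Z}/2\mathbb{Z}$ the classical signature. Then there exists a group homomorphism $\varepsilon:\widehat{\operatorname{PC}^{\bowtie}}\to \mathbb{Z}/2\mathbb{Z}$ whose restriction to ${\mathfrak S}_{\mathrm{fin}}$ equals $\varepsilon_{\mathrm{fin}}$.
   Context: A permutation of $X$ is finitely supported if it moves only finitely many points. The classical signature of a finitely supported permutation is its sign, written additively in $\mathbb{Z}/2\mathbb{Z}$. *)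

theory Defs
  imports "HOL-Analysis.Analysis" "HOL-Library.Z2" "HOL-Combinatorics.Permutations"
begin

definition X01 :: "real set" where
  "X01 = {0..<1}"

text \<open>Bijections of X are represented as maps real => real that are the identity
  outside X (canonical extension).\<close>
definition PChat :: "(real \<Rightarrow> real) set" where
  "PChat = {f. bij_betw f X01 X01 \<and> (\<forall>x. x \<notin> X01 \<longrightarrow> f x = x) \<and>
     (\<exists>F. finite F \<and> F \<subseteq> X01 \<and> (\<forall>x \<in> X01 - F. continuous (at x within X01) f))}"

definition Sfin :: "(real \<Rightarrow> real) set" where
  "Sfin = {f. bij_betw f X01 X01 \<and> (\<forall>x. x \<notin> X01 \<longrightarrow> f x = x) \<and> finite {x. f x \<noteq> x}}"

definition eps_fin :: "(real \<Rightarrow> real) \<Rightarrow> bit" where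
  "eps_fin f = (if evenperm f then 0 else 1)"

end

theory Submission
  imports Defs
begin

text \<open>
  Every f in PChat has a finite set P of cut points, containing 0, off which it is continuous.
  On each open piece between consecutive cut points f is then continuous and injective, hence
  strictly monotone, and it maps the piece onto a piece of f ` P.  Sending a cut point y to the
  cut point whose piece is mapped onto the piece starting at f y defines a permutation of P; its
  sign plus the number of pieces on which f reverses the order is the signature of f.  Adding a
  cut point x inside a piece changes nothing if f preserves the order there; otherwise x creates
  one more reversed piece and the permutation is composed with a transposition, so the parity is
  unchanged and the signature does not depend on P.  Using P for g and g ` P for f, the
  permutation of f \<circ> g is that of g composed with a conjugate of that of f, and a piece is
  reversed by f \<circ> g iff exactly one of f, g reverses it; this gives additivity.  A finitely
  supported permutation s fixes every piece of P = {0} \<union> supp s, so its permutation is s itself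
  and no piece is reversed.
\<close>

section \<open>Strictly monotone maps on open intervals\<close>

lemma interval_two_points: "(a::real) < b \<Longrightarrow> \<exists>s t. s \<in> {a<..<b} \<and> t \<in> {a<..<b} \<and> s < t"
  by (rule exI[of _ "(2 * a + b) / 3"], rule exI[of _ "(a + 2 * b) / 3"]) auto

lemma strict_antimono_on_iff_pair:
  fixes h :: "'a::linorder \<Rightarrow> 'b::linorder"
  assumes "strict_mono_on S h \<or> strict_antimono_on S h" "s \<in> S" "t \<in> S" "s < t"
  shows "strict_antimono_on S h \<longleftrightarrow> h t < h s"
  using assms unfolding monotone_on_def by (meson less_asym)

lemma strict_antimono_on_interval_iff:
  fixes h :: "real \<Rightarrow> real"
  assumes "strict_mono_on S h \<or> strict_antimono_on S h" "{u<..<v} \<subseteq> S" "u < v"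
  shows "strict_antimono_on {u<..<v} h \<longleftrightarrow> strict_antimono_on S h"
proof -
  obtain s t where st: "s \<in> {u<..<v}" "t \<in> {u<..<v}" "s < t"
    using interval_two_points[OF assms(3)] by blast
  have "strict_mono_on {u<..<v} h \<or> strict_antimono_on {u<..<v} h"
    using assms(1,2) monotone_on_subset by blast
  then show ?thesis
    using strict_antimono_on_iff_pair[OF _ st] strict_antimono_on_iff_pair[OF assms(1)] st assms(2)
    by blast
qed

lemma strict_monotone_image_interval:
  fixes f :: "real \<Rightarrow> real"
  assumes cont: "continuous_on {a<..<b} f"
    and mono: "strict_mono_on {a<..<b} f \<or> strict_antimono_on {a<..<b} f"
    and "a < b" and bdd: "bounded (f ` {a<..<b})"
  shows "f ` {a<..<b} = {Inf (f ` {a<..<b})<..<Sup (f ` {a<..<b})}"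
proof
  let ?J = "f ` {a<..<b}"
  have ne: "?J \<noteq> {}" using \<open>a < b\<close> by simp
  have bb: "bdd_below ?J" "bdd_above ?J"
    using bdd by (simp_all add: bounded_imp_bdd_below bounded_imp_bdd_above)
  show "?J \<subseteq> {Inf ?J<..<Sup ?J}"
  proof
    fix t assume "t \<in> ?J"
    then obtain y where y: "y \<in> {a<..<b}" "t = f y" by auto
    have "(a + y) / 2 \<in> {a<..<b}" "(a + y) / 2 < y" "(y + b) / 2 \<in> {a<..<b}" "y < (y + b) / 2"
      using y(1) by auto
    then obtain u v where "u \<in> {a<..<b}" "v \<in> {a<..<b}" "f u < f y" "f y < f v"
      using mono y(1) unfolding monotone_on_def by metis
    moreover have "Inf ?J \<le> f u" "f v \<le> Sup ?J"
      using bb calculation(1,2) by (auto intro: cInf_lower cSup_upper)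
    ultimately show "t \<in> {Inf ?J<..<Sup ?J}" using y(2) by auto
  qed
  show "{Inf ?J<..<Sup ?J} \<subseteq> ?J"
  proof
    fix t assume "t \<in> {Inf ?J<..<Sup ?J}"
    then have t: "Inf ?J < t" "t < Sup ?J" by auto
    obtain u where "u \<in> ?J" "u < t" using cInf_lessD[OF ne t(1)] by blast
    moreover obtain v where "v \<in> ?J" "t < v" using less_cSupD[OF ne t(2)] by blast
    moreover have "connected ?J" using connected_continuous_image[OF cont] by simp
    ultimately show "t \<in> ?J" unfolding connected_iff_interval by (meson less_imp_le)
  qed
qed

lemma strict_mono_on_image_split:
  fixes f :: "real \<Rightarrow> real"
  assumes mono: "strict_mono_on {a<..<b} f" and img: "f ` {a<..<b} = {c<..<d}"
    and x: "x \<in> {a<..<b}"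
  shows "f ` {a<..<x} = {c<..<f x}" "f ` {x<..<b} = {f x<..<d}"
proof -
  have image_filter: "f ` {y \<in> {a<..<b}. Q (f y)} = {t \<in> {c<..<d}. Q t}" for Q
    unfolding img[symmetric] by blast
  have "{a<..<x} = {y \<in> {a<..<b}. f y < f x}" "{x<..<b} = {y \<in> {a<..<b}. f x < f y}"
    using x strict_mono_on_less[OF mono] by auto
  moreover have "f x \<in> {c<..<d}" using img x by blast
  ultimately show "f ` {a<..<x} = {c<..<f x}" "f ` {x<..<b} = {f x<..<d}"
    using image_filter[of "\<lambda>t. t < f x"] image_filter[of "\<lambda>t. f x < t"] by auto
qed

lemma strict_antimono_on_image_split:
  fixes f :: "real \<Rightarrow> real"
  assumes anti: "strict_antimono_on {a<..<b} f" and img: "f ` {a<..<b} = {c<..<d}"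
    and x: "x \<in> {a<..<b}"
  shows "f ` {a<..<x} = {f x<..<d}" "f ` {x<..<b} = {c<..<f x}"
proof -
  have image_filter: "f ` {y \<in> {a<..<b}. Q (f y)} = {t \<in> {c<..<d}. Q t}" for Q
    unfolding img[symmetric] by blast
  have less: "f y < f z \<longleftrightarrow> z < y" if "y \<in> {a<..<b}" "z \<in> {a<..<b}" for y z
    using anti that unfolding monotone_on_def by (metis less_asym linorder_neqE)
  have "{a<..<x} = {y \<in> {a<..<b}. f x < f y}" "{x<..<b} = {y \<in> {a<..<b}. f y < f x}"
    using x less by auto
  moreover have "f x \<in> {c<..<d}" using img x by blast
  ultimately show "f ` {a<..<x} = {f x<..<d}" "f ` {x<..<b} = {c<..<f x}"
    using image_filter[of "\<lambda>t. t < f x"] image_filter[of "\<lambda>t. f x < t"] by auto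
qed

section \<open>Pieces between cut points\<close>

definition next_cut :: "real set \<Rightarrow> real \<Rightarrow> real" where
  "next_cut P p = Min (insert 1 {q \<in> P. p < q})"

definition piece :: "real set \<Rightarrow> real \<Rightarrow> real set" where
  "piece P p = {p<..<next_cut P p}"

lemma next_cut_le_one: "finite P \<Longrightarrow> next_cut P p \<le> 1"
  by (simp add: next_cut_def)

lemma next_cut_least: "finite P \<Longrightarrow> q \<in> P \<Longrightarrow> p < q \<Longrightarrow> next_cut P p \<le> q"
  by (simp add: next_cut_def)

lemma next_cut_in: "finite P \<Longrightarrow> next_cut P p \<in> P \<or> next_cut P p = 1"
  using Min_in[of "insert 1 {q \<in> P. p < q}"] by (auto simp: next_cut_def)

lemma next_cut_gt: "finite P \<Longrightarrow> p < 1 \<Longrightarrow> p < next_cut P p"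
  unfolding next_cut_def by (subst Min_gr_iff) auto

lemma next_cut_eqI:
  assumes "finite P" "c < d" "d \<in> P \<or> d = 1" "d \<le> 1" "{c<..<d} \<inter> P = {}"
  shows "next_cut P c = d"
  unfolding next_cut_def
proof (rule Min_eqI)
  show "d \<in> insert 1 {q \<in> P. c < q}" using assms(2,3) by auto
  fix q assume "q \<in> insert 1 {q \<in> P. c < q}"
  then show "d \<le> q" using assms(4,5) by (auto simp: not_less[symmetric])
qed (use assms(1) in simp)

lemma piece_subset: "finite P \<Longrightarrow> P \<subseteq> X01 \<Longrightarrow> p \<in> P \<Longrightarrow> piece P p \<subseteq> {0<..<1}"
  using next_cut_le_one[of P p] by (force simp: piece_def X01_def)

lemma next_cut_gt_cut: "finite P \<Longrightarrow> P \<subseteq> X01 \<Longrightarrow> p \<in> P \<Longrightarrow> p < next_cut P p"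
  using next_cut_gt[of P p] by (auto simp: X01_def)

lemma piece_nonempty: "finite P \<Longrightarrow> P \<subseteq> X01 \<Longrightarrow> p \<in> P \<Longrightarrow> piece P p \<noteq> {}"
  using next_cut_gt_cut[of P p] by (simp add: piece_def)

lemma piece_disjoint_cuts: "finite P \<Longrightarrow> piece P p \<inter> P = {}"
  using next_cut_least by (fastforce simp: piece_def)

lemma pieces_disjoint:
  assumes "finite P" "p \<in> P" "p' \<in> P" "p \<noteq> p'"
  shows "piece P p \<inter> piece P p' = {}"
proof -
  have "piece P u \<inter> piece P v = {}" if "v \<in> P" "u < v" for u v
    using next_cut_least[OF assms(1) that] by (auto simp: piece_def)
  then show ?thesis using assms(2-4) by (metis inf_commute linorder_neqE)
qed

lemma piece_cover:
  assumes "finite P" "0 \<in> P" "x \<in> X01" "x \<notin> P"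
  shows "\<exists>p\<in>P. x \<in> piece P p"
proof -
  define p where "p = Max {q \<in> P. q < x}"
  have below: "finite {q \<in> P. q < x}" "0 \<in> {q \<in> P. q < x}"
    using assms by (auto simp: X01_def order_le_less)
  have "p \<in> {q \<in> P. q < x}" unfolding p_def using below by (intro Max_in) auto
  then have p: "p \<in> P" "p < x" by auto
  have "x < next_cut P p"
  proof (rule ccontr)
    assume "\<not> x < next_cut P p"
    then have "next_cut P p \<noteq> 1" using assms(3) by (auto simp: X01_def)
    then have "next_cut P p \<in> P" using next_cut_in[OF assms(1)] by blast
    then have "next_cut P p \<in> {q \<in> P. q < x}"
      using assms(4) \<open>\<not> x < next_cut P p\<close> by (cases "next_cut P p = x") auto
    then have "next_cut P p \<le> p" using below(1) p_def by simp
    moreover have "p < next_cut P p"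
      using next_cut_gt[OF assms(1)] p assms(3) by (simp add: X01_def)
    ultimately show False by simp
  qed
  then show ?thesis using p by (auto simp: piece_def)
qed

lemma piece_insert:
  assumes fin: "finite P" and sub: "P \<subseteq> X01" and a: "a \<in> P" and x: "x \<in> piece P a"
  shows "piece (insert x P) a = {a<..<x}"
    and "piece (insert x P) x = {x<..<next_cut P a}"
    and "p \<in> P \<Longrightarrow> p \<noteq> a \<Longrightarrow> piece (insert x P) p = piece P p"
proof -
  have ax: "a < x" "x < next_cut P a" using x by (auto simp: piece_def)
  have fin': "finite (insert x P)" using fin by simp
  have "next_cut (insert x P) a = x"
  proof (rule next_cut_eqI[OF fin' ax(1)])
    show "x \<le> 1" using ax(2) next_cut_le_one[OF fin, of a] by simp
    have "{a<..<x} \<subseteq> piece P a" using ax by (auto simp: piece_def)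
    then show "{a<..<x} \<inter> insert x P = {}" using piece_disjoint_cuts[OF fin, of a] by auto
  qed simp
  then show "piece (insert x P) a = {a<..<x}" by (simp add: piece_def)
  have "next_cut (insert x P) x = next_cut P a"
  proof (rule next_cut_eqI[OF fin' ax(2)])
    show "next_cut P a \<in> insert x P \<or> next_cut P a = 1" using next_cut_in[OF fin] by auto
    have "{x<..<next_cut P a} \<subseteq> piece P a" using ax by (auto simp: piece_def)
    then show "{x<..<next_cut P a} \<inter> insert x P = {}"
      using piece_disjoint_cuts[OF fin, of a] by auto
  qed (rule next_cut_le_one[OF fin])
  then show "piece (insert x P) x = {x<..<next_cut P a}" by (simp add: piece_def)
  assume p: "p \<in> P" "p \<noteq> a"
  have "next_cut (insert x P) p = next_cut P p"
  proof (rule next_cut_eqI[OF fin'])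
    show "p < next_cut P p" using next_cut_gt_cut[OF fin sub p(1)] .
    show "next_cut P p \<in> insert x P \<or> next_cut P p = 1" using next_cut_in[OF fin] by auto
    show "{p<..<next_cut P p} \<inter> insert x P = {}"
      using piece_disjoint_cuts[OF fin, of p] pieces_disjoint[OF fin p(1) a p(2)] x
      by (auto simp: piece_def)
  qed (rule next_cut_le_one[OF fin])
  then show "piece (insert x P) p = piece P p" by (simp add: piece_def)
qed

section \<open>Cut points of a piecewise continuous bijection\<close>

definition left_end :: "(real \<Rightarrow> real) \<Rightarrow> real set \<Rightarrow> real \<Rightarrow> real" where
  "left_end f P p = Inf (f ` piece P p)"

definition cut_perm :: "(real \<Rightarrow> real) \<Rightarrow> real set \<Rightarrow> real \<Rightarrow> real" where
  "cut_perm f P = restrict_id (inv_into P (left_end f P) \<circ> f) P"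

definition reverses :: "(real \<Rightarrow> real) \<Rightarrow> real set \<Rightarrow> real \<Rightarrow> bool" where
  "reverses f P p \<longleftrightarrow> strict_antimono_on (piece P p) f"

definition signature_on :: "(real \<Rightarrow> real) \<Rightarrow> real set \<Rightarrow> bit" where
  "signature_on f P = eps_fin (cut_perm f P) + (\<Sum>p\<in>P. of_bool (reverses f P p))"

lemma cut_perm_outside: "y \<notin> P \<Longrightarrow> cut_perm f P y = y"
  by (simp add: cut_perm_def)

locale cut_map =
  fixes P :: "real set" and f :: "real \<Rightarrow> real"
  assumes finite_cuts: "finite P" and zero_cut: "0 \<in> P" and cuts_subset: "P \<subseteq> X01"
    and bij: "bij_betw f X01 X01"
    and continuous_off_cuts: "\<And>x. x \<in> X01 - P \<Longrightarrow> continuous (at x within X01) f"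
begin

lemma inj: "inj_on f X01"
  using bij by (rule bij_betw_imp_inj_on)

lemma cut_map_mono: "finite P' \<Longrightarrow> P \<subseteq> P' \<Longrightarrow> P' \<subseteq> X01 \<Longrightarrow> cut_map P' f"
  using zero_cut bij continuous_off_cuts by unfold_locales auto

lemma piece_subset_X01: "p \<in> P \<Longrightarrow> piece P p \<subseteq> X01"
  using piece_subset[OF finite_cuts cuts_subset] by (force simp: X01_def)

lemma image_piece_subset: "p \<in> P \<Longrightarrow> f ` piece P p \<subseteq> X01"
  using piece_subset_X01 bij bij_betw_imp_surj_on by blast

lemma piece_two_points:
  assumes "p \<in> P"
  obtains s t where "s \<in> piece P p" "t \<in> piece P p" "s < t"
  using interval_two_points[OF next_cut_gt_cut[OF finite_cuts cuts_subset assms]] that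
  unfolding piece_def by blast

lemma continuous_on_piece:
  assumes "p \<in> P"
  shows "continuous_on (piece P p) f"
proof (rule continuous_at_imp_continuous_on, rule ballI)
  fix x assume x: "x \<in> piece P p"
  then have "x \<in> interior X01"
    using piece_subset[OF finite_cuts cuts_subset assms] by (auto simp: X01_def)
  moreover have "x \<in> X01 - P"
    using x piece_subset_X01[OF assms] piece_disjoint_cuts[OF finite_cuts] by blast
  ultimately show "isCont f x" using continuous_off_cuts at_within_interior by metis
qed

lemma monotone_on_piece:
  "p \<in> P \<Longrightarrow> strict_mono_on (piece P p) f \<or> strict_antimono_on (piece P p) f"
  using injective_eq_monotone_map[of "piece P p" f] continuous_on_piece
    inj_on_subset[OF inj piece_subset_X01] by (simp add: piece_def)

lemma reverses_iff:
  "p \<in> P \<Longrightarrow> s \<in> piece P p \<Longrightarrow> t \<in> piece P p \<Longrightarrow> s < t \<Longrightarrow> reverses f P p \<longleftrightarrow> f t < f s"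
  unfolding reverses_def by (rule strict_antimono_on_iff_pair[OF monotone_on_piece])

lemma image_piece_interval:
  assumes "p \<in> P"
  shows "f ` piece P p = {left_end f P p<..<Sup (f ` piece P p)}"
  unfolding left_end_def piece_def
proof (rule strict_monotone_image_interval)
  show "continuous_on {p<..<next_cut P p} f" "strict_mono_on {p<..<next_cut P p} f \<or>
      strict_antimono_on {p<..<next_cut P p} f"
    using continuous_on_piece[OF assms] monotone_on_piece[OF assms] by (simp_all add: piece_def)
  show "p < next_cut P p" using finite_cuts cuts_subset assms by (rule next_cut_gt_cut)
  have "f ` {p<..<next_cut P p} \<subseteq> {0..1}"
    using image_piece_subset[OF assms] by (auto simp: piece_def X01_def)
  then show "bounded (f ` {p<..<next_cut P p})"
    using bounded_closed_interval by (rule bounded_subset[rotated])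
qed

lemma image_pieces_disjoint:
  assumes "p \<in> P" "p' \<in> P" "p \<noteq> p'"
  shows "f ` piece P p \<inter> f ` piece P p' = {}"
  using inj_on_image_Int[OF inj piece_subset_X01[OF assms(1)] piece_subset_X01[OF assms(2)]]
    pieces_disjoint[OF finite_cuts assms] by simp

lemma image_piece_disjoint_cuts:
  assumes "p \<in> P"
  shows "f ` piece P p \<inter> f ` P = {}"
  using inj_on_image_Int[OF inj piece_subset_X01[OF assms] cuts_subset]
    piece_disjoint_cuts[OF finite_cuts] by simp

lemma image_pieces_cover:
  assumes "t \<in> X01" "t \<notin> f ` P"
  shows "\<exists>p\<in>P. t \<in> f ` piece P p"
proof -
  obtain z where z: "z \<in> X01" "t = f z" using assms(1) bij bij_betw_imp_surj_on by blast
  then obtain p where "p \<in> P" "z \<in> piece P p"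
    using piece_cover[OF finite_cuts zero_cut] assms(2) by blast
  then show ?thesis using z by blast
qed

text \<open>An endpoint of an image piece lying inside X cannot be covered by another image piece,
  since that piece is open and would meet the first one.\<close>
lemma closure_image_piece:
  assumes p: "p \<in> P" and t: "t \<in> closure (f ` piece P p)" "t \<notin> f ` piece P p"
  shows "t \<in> f ` P \<or> t = 1"
proof (rule ccontr)
  assume "\<not> (t \<in> f ` P \<or> t = 1)"
  moreover have "t \<in> {0..1}"
    using closure_mono[OF image_piece_subset[OF p]] t(1) by (auto simp: X01_def)
  ultimately obtain p' where p': "p' \<in> P" "t \<in> f ` piece P p'"
    using image_pieces_cover by (force simp: X01_def)
  have "open (f ` piece P p')"
    using image_piece_interval[OF p'(1)] by (metis open_greaterThanLessThan)
  then have "f ` piece P p' \<inter> f ` piece P p \<noteq> {}"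
    using p'(2) t(1) open_Int_closure_eq_empty by blast
  then have "p' = p" using image_pieces_disjoint p p'(1) by blast
  then show False using p'(2) t(2) by simp
qed

lemma image_piece:
  assumes p: "p \<in> P"
  shows "left_end f P p \<in> f ` P" "f ` piece P p = piece (f ` P) (left_end f P p)"
proof -
  define c d where "c = left_end f P p" and "d = Sup (f ` piece P p)"
  have img: "f ` piece P p = {c<..<d}" using image_piece_interval[OF p] by (simp add: c_def d_def)
  then have "c < d" using piece_nonempty[OF finite_cuts cuts_subset p] by fastforce
  have "{c<..<d} \<subseteq> {0..1}" using img image_piece_subset[OF p] by (auto simp: X01_def)
  then have "d \<le> 1" using closure_mono[of "{c<..<d}" "{0..1}"] \<open>c < d\<close> by auto
  have "c \<in> f ` P" using closure_image_piece[OF p, of c] img \<open>c < d\<close> \<open>d \<le> 1\<close> by auto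
  moreover have "d \<in> f ` P \<or> d = 1" using closure_image_piece[OF p, of d] img \<open>c < d\<close> by auto
  moreover have "{c<..<d} \<inter> f ` P = {}" using image_piece_disjoint_cuts[OF p] img by simp
  ultimately have "next_cut (f ` P) c = d"
    using next_cut_eqI[of "f ` P" c d] finite_cuts \<open>c < d\<close> \<open>d \<le> 1\<close> by blast
  then show "left_end f P p \<in> f ` P" "f ` piece P p = piece (f ` P) (left_end f P p)"
    using \<open>c \<in> f ` P\<close> img by (simp_all add: c_def piece_def)
qed

lemma bij_betw_left_end: "bij_betw (left_end f P) P (f ` P)"
proof -
  have inj_left: "inj_on (left_end f P) P"
  proof (rule inj_onI)
    fix p p' assume p: "p \<in> P" "p' \<in> P" and "left_end f P p = left_end f P p'"
    then have "f ` piece P p = f ` piece P p'" using image_piece(2) by metis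
    then show "p = p'"
      using image_pieces_disjoint[OF p] piece_nonempty[OF finite_cuts cuts_subset p(1)] by auto
  qed
  have "left_end f P ` P = f ` P"
  proof (rule card_subset_eq)
    show "finite (f ` P)" using finite_cuts by simp
    show "left_end f P ` P \<subseteq> f ` P" using image_piece(1) by blast
    show "card (left_end f P ` P) = card (f ` P)"
      using card_image[OF inj_left] card_image[OF inj_on_subset[OF inj cuts_subset]] by simp
  qed
  with inj_left show ?thesis by (simp add: bij_betw_def)
qed

lemma cut_perm_permutes: "cut_perm f P permutes P"
  unfolding cut_perm_def
proof (intro permutes_restrict_id bij_betw_trans)
  show "bij_betw f P (f ` P)" using inj_on_subset[OF inj cuts_subset] by (rule inj_on_imp_bij_betw)
  show "bij_betw (inv_into P (left_end f P)) (f ` P) P"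
    using bij_betw_left_end by (rule bij_betw_inv_into)
qed

lemma cut_perm_in: "y \<in> P \<Longrightarrow> cut_perm f P y \<in> P"
  using cut_perm_permutes by (rule permutes_in_image[THEN iffD2])

lemma permutation_cut_perm: "permutation (cut_perm f P)"
  using finite_cuts cut_perm_permutes by (rule permutes_imp_permutation)

lemma left_end_cut_perm: "y \<in> P \<Longrightarrow> left_end f P (cut_perm f P y) = f y"
  using bij_betw_inv_into_right[OF bij_betw_left_end] by (simp add: cut_perm_def)

lemma cut_perm_eqI:
  assumes "y \<in> P" "p \<in> P" "left_end f P p = f y"
  shows "cut_perm f P y = p"
  using bij_betw_inv_into_left[OF bij_betw_left_end assms(2)] assms(1,3) by (simp add: cut_perm_def)

lemma signature_on_eq_eps_fin:
  assumes fixes_outside: "\<And>y. y \<notin> P \<Longrightarrow> f y = y"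
  shows "signature_on f P = eps_fin f"
proof -
  have fixes_pieces: "f y = y" if "p \<in> P" "y \<in> piece P p" for p y
  proof (rule fixes_outside)
    show "y \<notin> P" using that(2) piece_disjoint_cuts[OF finite_cuts, of p] by blast
  qed
  have fixed_image: "f ` piece P p = piece P p" if "p \<in> P" for p
  proof -
    have "f ` piece P p = (\<lambda>y. y) ` piece P p" by (rule image_cong[OF refl fixes_pieces[OF that]])
    then show ?thesis by simp
  qed
  have "cut_perm f P = f"
  proof
    fix y show "cut_perm f P y = f y"
    proof (cases "y \<in> P")
      case True
      have "f y \<in> P"
      proof (rule ccontr)
        assume "f y \<notin> P"
        then have "f (f y) = f y" by (rule fixes_outside)
        moreover have "y \<in> X01" using True cuts_subset by blast
        moreover have "f y \<in> X01" using bij \<open>y \<in> X01\<close> by (rule bij_betw_apply)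
        ultimately have "f y = y" using inj by (simp add: inj_on_eq_iff)
        with True \<open>f y \<notin> P\<close> show False by simp
      qed
      moreover have "left_end f P (f y) = f y"
        unfolding left_end_def fixed_image[OF \<open>f y \<in> P\<close>]
        using next_cut_gt_cut[OF finite_cuts cuts_subset \<open>f y \<in> P\<close>] by (simp add: piece_def)
      ultimately show ?thesis using cut_perm_eqI True by simp
    next
      case False
      then show ?thesis using cut_perm_outside fixes_outside by simp
    qed
  qed
  moreover have "\<not> reverses f P p" if p: "p \<in> P" for p
  proof -
    obtain u t where "u \<in> piece P p" "t \<in> piece P p" "u < t"
      using piece_two_points[OF p] .
    then show ?thesis using reverses_iff[OF p] fixes_pieces[OF p] by simp
  qed
  ultimately show ?thesis by (simp add: signature_on_def)
qed

end

section \<open>Independence of the cut points\<close>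

lemma bit_add_self_left [simp]: "b + (b + c) = (c::bit)"
  by (cases b; cases c) simp_all

lemma of_bool_neq_bit: "of_bool (A \<noteq> B) = of_bool A + (of_bool B :: bit)"
  by (cases A; cases B) simp_all

lemma eps_fin_comp: "permutation p \<Longrightarrow> permutation q \<Longrightarrow> eps_fin (p \<circ> q) = eps_fin p + eps_fin q"
  by (simp add: eps_fin_def evenperm_comp)

lemma eps_fin_transpose: "eps_fin (Transposition.transpose a b) = of_bool (a \<noteq> b)"
  by (simp add: eps_fin_def evenperm_swap)

context cut_map
begin

lemma left_end_insert:
  assumes a: "a \<in> P" and x: "x \<in> piece P a"
  shows "p \<in> P \<Longrightarrow> p \<noteq> a \<Longrightarrow> left_end f (insert x P) p = left_end f P p"
    and "left_end f (insert x P) a = (if reverses f P a then f x else left_end f P a)"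
    and "left_end f (insert x P) x = (if reverses f P a then left_end f P a else f x)"
proof -
  show "p \<in> P \<Longrightarrow> p \<noteq> a \<Longrightarrow> left_end f (insert x P) p = left_end f P p"
    using piece_insert(3)[OF finite_cuts cuts_subset a x] by (simp add: left_end_def)
  define b d where "b = next_cut P a" and "d = Sup (f ` piece P a)"
  have img: "f ` {a<..<b} = {left_end f P a<..<d}"
    using image_piece_interval[OF a] by (simp add: b_def d_def piece_def)
  have x': "x \<in> {a<..<b}" using x by (simp add: piece_def b_def)
  have fx: "f x \<in> {left_end f P a<..<d}" using img x' by blast
  have pieces: "piece (insert x P) a = {a<..<x}" "piece (insert x P) x = {x<..<b}"
    using piece_insert(1,2)[OF finite_cuts cuts_subset a x] by (simp_all add: b_def)
  have "left_end f (insert x P) a = (if reverses f P a then f x else left_end f P a) \<and>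
      left_end f (insert x P) x = (if reverses f P a then left_end f P a else f x)"
  proof (cases "reverses f P a")
    case True
    then have "strict_antimono_on {a<..<b} f" by (simp add: reverses_def piece_def b_def)
    then show ?thesis
      using strict_antimono_on_image_split[OF _ img x'] pieces fx True by (simp add: left_end_def)
  next
    case False
    then have "strict_mono_on {a<..<b} f"
      using monotone_on_piece[OF a] by (simp add: reverses_def piece_def b_def)
    then show ?thesis
      using strict_mono_on_image_split[OF _ img x'] pieces fx False by (simp add: left_end_def)
  qed
  then show "left_end f (insert x P) a = (if reverses f P a then f x else left_end f P a)"
    and "left_end f (insert x P) x = (if reverses f P a then left_end f P a else f x)"
    by simp_all
qed

lemma reverses_insert:
  assumes a: "a \<in> P" and x: "x \<in> piece P a"
  shows "p \<in> P \<Longrightarrow> reverses f (insert x P) p \<longleftrightarrow> reverses f P p"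
    and "reverses f (insert x P) x \<longleftrightarrow> reverses f P a"
proof -
  have mono: "strict_mono_on (piece P a) f \<or> strict_antimono_on (piece P a) f"
    by (rule monotone_on_piece[OF a])
  have ax: "a < x" "x < next_cut P a" using x by (auto simp: piece_def)
  note pieces = piece_insert[OF finite_cuts cuts_subset a x]
  have "{a<..<x} \<subseteq> piece P a" "{x<..<next_cut P a} \<subseteq> piece P a"
    using ax by (auto simp: piece_def)
  note left_half = strict_antimono_on_interval_iff[OF mono this(1) ax(1)]
    and right_half = strict_antimono_on_interval_iff[OF mono this(2) ax(2)]
  have "reverses f (insert x P) a \<longleftrightarrow> reverses f P a"
    unfolding reverses_def pieces(1) by (rule left_half)
  then show "p \<in> P \<Longrightarrow> reverses f (insert x P) p \<longleftrightarrow> reverses f P p"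
    using pieces(3) by (cases "p = a") (simp_all add: reverses_def)
  show "reverses f (insert x P) x \<longleftrightarrow> reverses f P a"
    unfolding reverses_def pieces(2) by (rule right_half)
qed

text \<open>Splitting a reversed piece at x swaps the left ends of the two new pieces.\<close>
lemma cut_perm_insert:
  assumes a: "a \<in> P" and x: "x \<in> piece P a"
  shows "cut_perm f (insert x P) =
    (if reverses f P a then Transposition.transpose a x else id) \<circ> cut_perm f P"
proof -
  define \<tau> where "\<tau> = (if reverses f P a then Transposition.transpose a x else id)"
  have "a < x" using x by (simp add: piece_def)
  moreover have "x \<notin> P" using x piece_disjoint_cuts[OF finite_cuts, of a] by blast
  ultimately have x_new: "x \<in> X01" "x \<notin> P" "x \<noteq> a" using x piece_subset_X01[OF a] by auto
  interpret refined: cut_map "insert x P" f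
    using x_new(1) finite_cuts cuts_subset by (intro cut_map_mono) auto
  have \<tau>_in: "\<tau> p \<in> insert x P" if "p \<in> insert x P" for p
    using that a by (auto simp: \<tau>_def Transposition.transpose_def)
  have \<tau>_old: "left_end f (insert x P) (\<tau> p) = left_end f P p" if "p \<in> P" for p
    using left_end_insert[OF a x] that x_new
    by (cases "p = a") (auto simp: \<tau>_def Transposition.transpose_def)
  have \<tau>_new: "left_end f (insert x P) (\<tau> x) = f x"
    using left_end_insert(2,3)[OF a x] by (auto simp: \<tau>_def)
  have "cut_perm f (insert x P) y = \<tau> (cut_perm f P y)" for y
  proof -
    consider (old) "y \<in> P" | (new) "y = x" | (outside) "y \<notin> insert x P" by blast
    then show ?thesis
    proof cases
      case old
      then show ?thesis
        using refined.cut_perm_eqI \<tau>_in cut_perm_in \<tau>_old left_end_cut_perm by simp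
    next
      case new
      then show ?thesis
        using refined.cut_perm_eqI[OF insertI1 \<tau>_in[OF insertI1] \<tau>_new] cut_perm_outside x_new(2)
        by simp
    next
      case outside
      then show ?thesis using a cut_perm_outside by (auto simp: \<tau>_def Transposition.transpose_def)
    qed
  qed
  then show ?thesis by (auto simp: \<tau>_def)
qed

lemma signature_on_insert:
  assumes "x \<in> X01" "x \<notin> P"
  shows "signature_on f (insert x P) = signature_on f P"
proof -
  obtain a where a: "a \<in> P" "x \<in> piece P a"
    using piece_cover[OF finite_cuts zero_cut assms] by blast
  have "a \<noteq> x" using a(2) by (auto simp: piece_def)
  let ?r = "of_bool (reverses f P a) :: bit"
  have eps: "eps_fin (cut_perm f (insert x P)) = ?r + eps_fin (cut_perm f P)"
  proof (cases "reverses f P a")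
    case True
    then show ?thesis
      using cut_perm_insert[OF a] eps_fin_comp[OF permutation_swap_id permutation_cut_perm]
        eps_fin_transpose[of a x] \<open>a \<noteq> x\<close> by simp
  next
    case False
    then show ?thesis using cut_perm_insert[OF a] by simp
  qed
  have "(\<Sum>p\<in>insert x P. of_bool (reverses f (insert x P) p)) =
      of_bool (reverses f (insert x P) x) + (\<Sum>p\<in>P. of_bool (reverses f (insert x P) p))"
    using finite_cuts assms(2) by (rule sum.insert)
  also have "\<dots> = ?r + (\<Sum>p\<in>P. of_bool (reverses f P p))"
    using reverses_insert[OF a] by (intro arg_cong2[where f = "(+)"] sum.cong) auto
  finally show ?thesis unfolding signature_on_def eps by (simp only: ac_simps bit_add_self_left)
qed

lemma signature_on_union: "finite A \<Longrightarrow> A \<subseteq> X01 \<Longrightarrow> signature_on f (P \<union> A) = signature_on f P"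
proof (induction A rule: finite_induct)
  case empty
  then show ?case by simp
next
  case (insert x A)
  interpret enlarged: cut_map "P \<union> A" f
    using insert finite_cuts cuts_subset by (intro cut_map_mono) auto
  show ?case
  proof (cases "x \<in> P \<union> A")
    case True
    then show ?thesis using insert by (simp add: insert_absorb)
  next
    case False
    then show ?thesis using enlarged.signature_on_insert insert by simp
  qed
qed

end

lemma signature_on_indep:
  assumes "cut_map P f" "cut_map P' f"
  shows "signature_on f P = signature_on f P'"
  using cut_map.signature_on_union[OF assms(1) cut_map.finite_cuts[OF assms(2)]
      cut_map.cuts_subset[OF assms(2)]]
    cut_map.signature_on_union[OF assms(2) cut_map.finite_cuts[OF assms(1)]
      cut_map.cuts_subset[OF assms(1)]]
  by (simp add: Un_commute)

section \<open>Composition\<close>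

locale cut_map_comp = inner: cut_map P g + outer: cut_map "g ` P" f for P g f
begin

lemma cut_map_comp: "cut_map P (f \<circ> g)"
proof
  show "finite P" "0 \<in> P" "P \<subseteq> X01" by (fact inner.finite_cuts inner.zero_cut inner.cuts_subset)+
  show "bij_betw (f \<circ> g) X01 X01" using inner.bij outer.bij by (rule bij_betw_trans)
  fix x assume x: "x \<in> X01 - P"
  have "g x \<in> X01 - g ` P"
    using x inner.bij inner.inj inner.cuts_subset by (auto simp: bij_betw_def inj_on_def)
  then have "continuous (at (g x) within g ` X01) f"
    using outer.continuous_off_cuts inner.bij by (simp add: bij_betw_def)
  then show "continuous (at x within X01) (f \<circ> g)"
    using inner.continuous_off_cuts[OF x] by (rule continuous_within_compose[rotated])
qed

sublocale composite: cut_map P "f \<circ> g"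
  by (rule cut_map_comp)

lemma left_end_comp:
  assumes "p \<in> P"
  shows "left_end (f \<circ> g) P p = left_end f (g ` P) (left_end g P p)"
proof -
  have "(f \<circ> g) ` piece P p = f ` piece (g ` P) (left_end g P p)"
    by (metis image_comp inner.image_piece(2)[OF assms])
  then show ?thesis unfolding left_end_def by (simp only:)
qed

lemma reverses_comp:
  assumes p: "p \<in> P"
  shows "reverses (f \<circ> g) P p \<longleftrightarrow> reverses g P p \<noteq> reverses f (g ` P) (left_end g P p)"
proof -
  define q where "q = left_end g P p"
  obtain s t where st: "s \<in> piece P p" "t \<in> piece P p" "s < t"
    using inner.piece_two_points[OF p] .
  have g_st: "g s \<in> piece (g ` P) q" "g t \<in> piece (g ` P) q" "q \<in> g ` P"
    using st inner.image_piece[OF p] by (auto simp: q_def)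
  have "s \<in> X01" "t \<in> X01" using st inner.piece_subset_X01[OF p] by auto
  then have "g s \<noteq> g t" "f (g s) \<noteq> f (g t)"
    using st(3) inner.inj outer.inj inner.bij bij_betw_apply
    by (metis inj_on_eq_iff less_irrefl)+
  moreover have "reverses (f \<circ> g) P p \<longleftrightarrow> f (g t) < f (g s)"
    using composite.reverses_iff[OF p st] by simp
  moreover have "reverses g P p \<longleftrightarrow> g t < g s" using inner.reverses_iff[OF p st] .
  moreover have "reverses f (g ` P) q \<longleftrightarrow>
      (if g s < g t then f (g t) < f (g s) else f (g s) < f (g t))"
    using outer.reverses_iff[OF g_st(3,1,2)] outer.reverses_iff[OF g_st(3,2,1)] \<open>g s \<noteq> g t\<close>
    by (auto simp: not_less order_le_less)
  ultimately show ?thesis by (auto simp: q_def split: if_splits)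
qed

lemma cut_perm_comp:
  "cut_perm (f \<circ> g) P = cut_perm g P \<circ> map_permutation (g ` P) (inv_into P g) (cut_perm f (g ` P))"
proof
  fix y
  have inj_g: "inj_on g P" using inner.inj inner.cuts_subset by (rule inj_on_subset)
  show "cut_perm (f \<circ> g) P y =
    (cut_perm g P \<circ> map_permutation (g ` P) (inv_into P g) (cut_perm f (g ` P))) y"
  proof (cases "y \<in> P")
    case True
    obtain z where z: "z \<in> P" "cut_perm f (g ` P) (g y) = g z"
      using outer.cut_perm_in True by blast
    have "map_permutation (g ` P) (inv_into P g) (cut_perm f (g ` P)) (inv_into P g (g y)) =
        inv_into P g (cut_perm f (g ` P) (g y))"
      using True by (intro map_permutation_apply inj_on_inv_into) auto
    then have "map_permutation (g ` P) (inv_into P g) (cut_perm f (g ` P)) y = z"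
      using True z inj_g by simp
    moreover have "cut_perm (f \<circ> g) P y = cut_perm g P z"
    proof (rule composite.cut_perm_eqI[OF True inner.cut_perm_in[OF z(1)]])
      have "left_end f (g ` P) (g z) = f (g y)"
        using outer.left_end_cut_perm[of "g y"] True z(2) by simp
      then show "left_end (f \<circ> g) P (cut_perm g P z) = (f \<circ> g) y"
        using left_end_comp[OF inner.cut_perm_in[OF z(1)]] inner.left_end_cut_perm[OF z(1)] by simp
    qed
    ultimately show ?thesis by simp
  next
    case False
    then have "y \<notin> inv_into P g ` g ` P" using inj_g by simp
    then show ?thesis
      using False by (simp add: cut_perm_outside map_permutation_def)
  qed
qed

lemma signature_on_comp: "signature_on (f \<circ> g) P = signature_on g P + signature_on f (g ` P)"
proof -
  have inj_g: "inj_on g P" using inner.inj inner.cuts_subset by (rule inj_on_subset)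
  have bij_inv: "bij_betw (inv_into P g) (g ` P) P"
    using inj_g by (intro bij_betw_inv_into inj_on_imp_bij_betw)
  let ?M = "map_permutation (g ` P) (inv_into P g) (cut_perm f (g ` P))"
  have "permutation ?M"
    using map_permutation_permutes[OF bij_inv outer.cut_perm_permutes] inner.finite_cuts
    by (simp add: permutes_imp_permutation)
  moreover have "eps_fin ?M = eps_fin (cut_perm f (g ` P))"
    using evenperm_map_permutation[OF bij_betw_imp_inj_on[OF bij_inv] outer.cut_perm_permutes]
      outer.finite_cuts by (simp add: eps_fin_def)
  ultimately have eps:
      "eps_fin (cut_perm (f \<circ> g) P) = eps_fin (cut_perm g P) + eps_fin (cut_perm f (g ` P))"
    using cut_perm_comp eps_fin_comp inner.permutation_cut_perm by simp
  have "(\<Sum>p\<in>P. of_bool (reverses (f \<circ> g) P p)) =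
      (\<Sum>p\<in>P. of_bool (reverses g P p) + (of_bool (reverses f (g ` P) (left_end g P p)) :: bit))"
  proof (rule sum.cong[OF refl])
    fix p assume "p \<in> P"
    show "of_bool (reverses (f \<circ> g) P p) =
        of_bool (reverses g P p) + (of_bool (reverses f (g ` P) (left_end g P p)) :: bit)"
      unfolding reverses_comp[OF \<open>p \<in> P\<close>] by (rule of_bool_neq_bit)
  qed
  also have "\<dots> =
      (\<Sum>p\<in>P. of_bool (reverses g P p)) + (\<Sum>p\<in>P. of_bool (reverses f (g ` P) (left_end g P p)))"
    by (rule sum.distrib)
  also have "(\<Sum>p\<in>P. of_bool (reverses f (g ` P) (left_end g P p))) =
      (\<Sum>q\<in>g ` P. of_bool (reverses f (g ` P) q) :: bit)"
    using inner.bij_betw_left_end by (rule sum.reindex_bij_betw)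
  finally have reversals: "(\<Sum>p\<in>P. of_bool (reverses (f \<circ> g) P p)) =
      (\<Sum>p\<in>P. of_bool (reverses g P p)) + (\<Sum>q\<in>g ` P. of_bool (reverses f (g ` P) q) :: bit)" .
  show ?thesis unfolding signature_on_def eps reversals by (simp only: ac_simps)
qed

end

lemma common_cuts:
  assumes g: "cut_map Pg g" and f: "cut_map Pf f"
  shows "\<exists>P. cut_map_comp P g f"
proof -
  define P where "P = Pg \<union> (g -` Pf \<inter> X01)"
  have "finite (g -` Pf \<inter> X01)"
    using cut_map.finite_cuts[OF f] cut_map.inj[OF g] by (rule finite_vimage_IntI)
  then have g_cuts: "cut_map P g"
    using cut_map.finite_cuts[OF g] cut_map.cuts_subset[OF g] unfolding P_def
    by (intro cut_map.cut_map_mono[OF g]) auto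
  have onto: "g ` X01 = X01" using cut_map.bij[OF g] by (rule bij_betw_imp_surj_on)
  have "Pf \<subseteq> g ` P"
  proof
    fix q assume "q \<in> Pf"
    then obtain z where "z \<in> X01" "q = g z" using onto cut_map.cuts_subset[OF f] by blast
    then show "q \<in> g ` P" using \<open>q \<in> Pf\<close> by (auto simp: P_def)
  qed
  moreover have "g ` P \<subseteq> X01" using onto cut_map.cuts_subset[OF g_cuts] by blast
  ultimately have "cut_map (g ` P) f"
    using cut_map.finite_cuts[OF g_cuts] by (intro cut_map.cut_map_mono[OF f]) auto
  with g_cuts show ?thesis by (auto simp: cut_map_comp_def)
qed

section \<open>The signature\<close>

definition signature :: "(real \<Rightarrow> real) \<Rightarrow> bit" where
  "signature f = signature_on f (SOME P. cut_map P f)"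

lemma signature_eq: "cut_map P f \<Longrightarrow> signature f = signature_on f P"
  unfolding signature_def by (metis someI signature_on_indep)

lemma PChat_cut_map:
  assumes "f \<in> PChat"
  shows "\<exists>P. cut_map P f"
proof -
  obtain F where F: "finite F" "F \<subseteq> X01" "\<forall>x \<in> X01 - F. continuous (at x within X01) f"
    and bij: "bij_betw f X01 X01"
    using assms by (auto simp: PChat_def)
  have "cut_map (insert 0 F) f"
    using F bij by unfold_locales (auto simp: X01_def)
  then show ?thesis ..
qed

lemma signature_comp:
  assumes "f \<in> PChat" "g \<in> PChat"
  shows "signature (f \<circ> g) = signature f + signature g"
proof -
  obtain P where "cut_map_comp P g f"
    using PChat_cut_map[OF assms(1)] PChat_cut_map[OF assms(2)] common_cuts by blast
  then interpret cut_map_comp P g f .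
  have "signature (f \<circ> g) = signature_on g P + signature_on f (g ` P)"
    using signature_eq[OF cut_map_comp] signature_on_comp by simp
  also have "\<dots> = signature g + signature f"
    using signature_eq[OF inner.cut_map_axioms] signature_eq[OF outer.cut_map_axioms]
    by (simp only:)
  finally show ?thesis by (simp only: add.commute)
qed

lemma Sfin_cut_map:
  assumes "s \<in> Sfin"
  shows "cut_map (insert 0 {x. s x \<noteq> x}) s"
proof
  let ?M = "{x. s x \<noteq> x}"
  from assms have bij: "bij_betw s X01 X01" and fin: "finite ?M" and "?M \<subseteq> X01"
    by (auto simp: Sfin_def)
  then show "finite (insert 0 ?M)" "0 \<in> insert 0 ?M" "insert 0 ?M \<subseteq> X01" "bij_betw s X01 X01"
    by (simp_all add: X01_def)
  fix x assume "x \<in> X01 - insert 0 ?M"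
  moreover have "open (- ?M)" using fin by (simp add: finite_imp_closed open_Compl)
  ultimately have "eventually (\<lambda>y. y \<in> - ?M) (nhds x)" by (intro eventually_nhds_in_open) auto
  then have "eventually (\<lambda>y. s y = y) (nhds x)" by (rule eventually_mono) simp
  then have "isCont s x \<longleftrightarrow> isCont (\<lambda>y. y) x" by (rule isCont_cong)
  then have "isCont s x" by simp
  then show "continuous (at x within X01) s" by (rule continuous_at_imp_continuous_at_within)
qed

lemma signature_Sfin: "s \<in> Sfin \<Longrightarrow> signature s = eps_fin s"
  using signature_eq[OF Sfin_cut_map] cut_map.signature_on_eq_eps_fin[OF Sfin_cut_map] by simp

theorem theorem1p1:
  shows "\<exists>\<epsilon> :: (real \<Rightarrow> real) \<Rightarrow> bit.
           (\<forall>f \<in> PChat. \<forall>g \<in> PChat. \<epsilon> (f \<circ> g) = \<epsilon> f + \<epsilon> g) \<and>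
           (\<forall>s \<in> Sfin. \<epsilon> s = eps_fin s)"
  using signature_comp signature_Sfin by blast

end
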